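(* With the setting of the conformal-gauge Dirac bracket (constraints $\vec x\cdot\vec p=0$, $|\vec x|^2=|\vec p|^2$, $\vec x\wedge\vec p\ne0$, Dirac bracket $\{\cdot,\cdot\}_D$, and $\mathcal N=|\vec J|$, $\vec J=\vec x\wedge\vec p$, $\vec K=|\vec x|\vec x$, $\vec L=|\vec p|\vec p$), define on the constraint surface the complex functions $$w_0=K_-+iL_-=(|\vec x|p_2+|\vec p|x_1)-i(|\vec p|x_2-|\vec x|p_1),\qquad w_1=-(K_++iL_+),$$ where $K_\pm=K_1\pm iK_2$, $L_\pm=L_1\pm iL_2$. Then $|w_0|=\mathcal N+J_3$, $|w_1|=\mathcal N-J_3$, and $$\{w_0,w_1\}_D=0,\quad \{w_0,\bar w_1\}_D=0,\quad \{w_0,\bar w_0\}_D=-4i(\mathcal N+J_3),\quad \{w_1,\bar w_1\}_D=-4i(\mathcal N-J_3).$$ Consequently, if $(z_0,z_1)$ are (locally defined) square roots with $z_A^2=w_A$, then $\frac12(|z_0|^2+|z_1|^2)=\mathcal N$, $\frac12(|z_0|^2-|z_1|^2)=J_3$, and these brackets are those of canonical spinor variables with $\{z_A,\bar z_B\}=-i\delta_{AB}$, $\{z_A,z_B\}=0$. *)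

theory Defs
  imports "HOL-Analysis.Analysis" "HOL-Analysis.Cross3"
begin

type_synonym obs = "real^3 \<Rightarrow> real^3 \<Rightarrow> complex"

definition dX :: "3 \<Rightarrow> obs \<Rightarrow> obs" where
  "dX i f x p = vector_derivative (\<lambda>t. f (x + t *\<^sub>R axis i 1) p) (at 0)"

definition dP :: "3 \<Rightarrow> obs \<Rightarrow> obs" where
  "dP i f x p = vector_derivative (\<lambda>t. f x (p + t *\<^sub>R axis i 1)) (at 0)"

definition PB :: "obs \<Rightarrow> obs \<Rightarrow> obs" where
  "PB f g x p = (\<Sum>i\<in>UNIV. dX i f x p * dP i g x p - dP i f x p * dX i g x p)"

definition phi1 :: obs where "phi1 x p = complex_of_real (x \<bullet> p)"
definition phi2 :: obs where "phi2 x p = complex_of_real (norm x ^ 2 - norm p ^ 2)"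

text \<open>Dirac bracket for the two second-class constraints:
  {f,g}_D = {f,g} - sum_{a,b} {f,phi_a} (C^{-1})_{ab} {phi_b,g}, with C_{ab} = {phi_a,phi_b};
  the inverse of the 2x2 matrix C is written out explicitly.\<close>

definition DB :: "obs \<Rightarrow> obs \<Rightarrow> obs" where
  "DB f g x p =
     (let phi = (\<lambda>a::nat. if a = 0 then phi1 else phi2);
          C = (\<lambda>a b. PB (phi a) (phi b) x p);
          d = C 0 0 * C 1 1 - C 0 1 * C 1 0;
          Cinv = (\<lambda>a b. (if a = 0 \<and> b = 0 then C 1 1
                        else if a = 1 \<and> b = 1 then C 0 0
                        else - C a b) / d)
      in PB f g x p - (\<Sum>a\<in>{0,1}. \<Sum>b\<in>{0,1}. PB f (phi a) x p * Cinv a b * PB (phi b) g x p))"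

definition cnjf :: "obs \<Rightarrow> obs" where "cnjf f x p = cnj (f x p)"

definition onConstraint :: "real^3 \<Rightarrow> real^3 \<Rightarrow> bool" where
  "onConstraint x p \<longleftrightarrow> x \<bullet> p = 0 \<and> norm x ^ 2 = norm p ^ 2 \<and> cross3 x p \<noteq> 0"

definition Jv :: "real^3 \<Rightarrow> real^3 \<Rightarrow> real^3" where "Jv x p = cross3 x p"
definition NN :: "real^3 \<Rightarrow> real^3 \<Rightarrow> real" where "NN x p = norm (Jv x p)"
definition Kv :: "real^3 \<Rightarrow> real^3 \<Rightarrow> real^3" where "Kv x p = norm x *\<^sub>R x"
definition Lv :: "real^3 \<Rightarrow> real^3 \<Rightarrow> real^3" where "Lv x p = norm p *\<^sub>R p"

definition Kplus :: obs where "Kplus x p = Complex (Kv x p $ 1) (Kv x p $ 2)"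
definition Kminus :: obs where "Kminus x p = Complex (Kv x p $ 1) (- (Kv x p $ 2))"
definition Lplus :: obs where "Lplus x p = Complex (Lv x p $ 1) (Lv x p $ 2)"
definition Lminus :: obs where "Lminus x p = Complex (Lv x p $ 1) (- (Lv x p $ 2))"

definition w0 :: obs where "w0 x p = Kminus x p + \<i> * Lminus x p"
definition w1 :: obs where "w1 x p = - (Kplus x p + \<i> * Lplus x p)"

end

theory Submission
  imports Defs
begin

text \<open>On the constraint surface \<open>|x| = |p|\<close> and \<open>{phi1, phi2} = -4|x|\<^sup>2 \<noteq> 0\<close>, so the
  Dirac bracket is the Poisson bracket plus an explicit correction built from the brackets
  with the two constraints. In coordinates every bracket of \<open>w0\<close>, \<open>w1\<close> then becomes a
  polynomial identity modulo \<open>x \<bullet> p = 0\<close> and \<open>|x|\<^sup>2 = |p|\<^sup>2\<close>, and Lagrange's identity gives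
  \<open>N = |x| |p| = |x|\<^sup>2\<close>, whence \<open>|w0| = N + J3\<close> and \<open>|w1| = N - J3\<close>.
  A continuous square root \<open>z\<close> of \<open>w \<noteq> 0\<close> has \<open>dz = dw / (2z)\<close>, so brackets of square
  roots are those of the \<open>w\<close>'s divided by \<open>4 z z'\<close> (with \<open>z'\<close> conjugated together with
  \<open>w'\<close>), and \<open>z cnj z = |w|\<close> turns \<open>{w, cnj w} = -4i |w|\<close> into \<open>{z, cnj z} = -i\<close>.\<close>

section \<open>Coordinates and partial derivatives\<close>

lemma dX_eqI: "((\<lambda>t. f (x + t *\<^sub>R axis i 1) p) has_vector_derivative D) (at 0) \<Longrightarrow> dX i f x p = D"
  by (simp add: dX_def vector_derivative_at)

lemma dP_eqI: "((\<lambda>t. f x (p + t *\<^sub>R axis i 1)) has_vector_derivative D) (at 0) \<Longrightarrow> dP i f x p = D"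
  by (simp add: dP_def vector_derivative_at)

lemma dX_cnjf_eqI:
  "((\<lambda>t. f (x + t *\<^sub>R axis i 1) p) has_vector_derivative D) (at 0) \<Longrightarrow> dX i (cnjf f) x p = cnj D"
  unfolding cnjf_def by (rule dX_eqI) (rule has_vector_derivative_cnj)

lemma dP_cnjf_eqI:
  "((\<lambda>t. f x (p + t *\<^sub>R axis i 1)) has_vector_derivative D) (at 0) \<Longrightarrow> dP i (cnjf f) x p = cnj D"
  unfolding cnjf_def by (rule dP_eqI) (rule has_vector_derivative_cnj)

lemma has_real_derivative_component_along_axis:
  "((\<lambda>t. (x + t *\<^sub>R axis i 1) $ j) has_real_derivative axis i 1 $ j) (at 0)"
  by (auto intro!: derivative_eq_intros)

lemma has_real_derivative_norm_along_axis:
  fixes x :: "real^'n"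
  assumes "x \<noteq> 0"
  shows "((\<lambda>t. norm (x + t *\<^sub>R axis i 1)) has_real_derivative x $ i / norm x) (at 0)"
proof -
  have "((\<lambda>t. x + t *\<^sub>R axis i 1) has_derivative (\<lambda>t. t *\<^sub>R axis i 1)) (at 0)"
    by (auto intro!: derivative_eq_intros)
  from has_derivative_compose[OF this, of norm "\<lambda>h. h \<bullet> sgn x"] has_derivative_norm[OF assms]
  have "((\<lambda>t. norm (x + t *\<^sub>R axis i 1)) has_derivative (\<lambda>t. (t *\<^sub>R axis i 1) \<bullet> sgn x)) (at 0)"
    by simp
  moreover have "(\<lambda>t. (t *\<^sub>R axis i 1) \<bullet> sgn x) = (*) (x $ i / norm x)"
    by (auto simp: sgn_div_norm inner_axis' field_simps)
  ultimately show ?thesis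
    by (simp add: has_field_derivative_def)
qed

lemma w0_coords: "w0 x p = Complex (norm x * x$1 + norm p * p$2) (norm p * p$1 - norm x * x$2)"
  by (simp add: w0_def Kminus_def Lminus_def Kv_def Lv_def complex_eq_iff)

lemma w1_coords: "w1 x p = Complex (norm p * p$2 - norm x * x$1) (- (norm x * x$2 + norm p * p$1))"
  by (simp add: w1_def Kplus_def Lplus_def Kv_def Lv_def complex_eq_iff)

lemma phi2_coords: "phi2 x p = Complex (norm x ^ 2 - norm p ^ 2) 0"
  by (simp add: phi2_def complex_eq_iff)

lemma Jv_component_3: "Jv x p $ 3 = x$1 * p$2 - x$2 * p$1"
  by (simp add: Jv_def cross3_def)

lemma abs_Jv_component_le_NN: "\<bar>Jv x p $ i\<bar> \<le> NN x p"
  unfolding NN_def by (rule component_le_norm_cart)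

lemmas along_axis_derivative_intros =
  derivative_eq_intros has_real_derivative_component_along_axis has_real_derivative_norm_along_axis

lemma w0_has_derivative_x:
  assumes "x \<noteq> 0"
  shows "((\<lambda>t. w0 (x + t *\<^sub>R axis i 1) p) has_vector_derivative
    Complex (x$i / norm x * x$1 + norm x * axis i 1 $ 1) (- (x$i / norm x * x$2 + norm x * axis i 1 $ 2))) (at 0)"
  unfolding w0_coords has_vector_derivative_complex_iff
  using assms by (auto intro!: along_axis_derivative_intros simp: field_simps)

lemma w0_has_derivative_p:
  assumes "p \<noteq> 0"
  shows "((\<lambda>t. w0 x (p + t *\<^sub>R axis i 1)) has_vector_derivative
    Complex (p$i / norm p * p$2 + norm p * axis i 1 $ 2) (p$i / norm p * p$1 + norm p * axis i 1 $ 1)) (at 0)"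
  unfolding w0_coords has_vector_derivative_complex_iff
  using assms by (auto intro!: along_axis_derivative_intros simp: field_simps)

lemma w1_has_derivative_x:
  assumes "x \<noteq> 0"
  shows "((\<lambda>t. w1 (x + t *\<^sub>R axis i 1) p) has_vector_derivative
    Complex (- (x$i / norm x * x$1 + norm x * axis i 1 $ 1)) (- (x$i / norm x * x$2 + norm x * axis i 1 $ 2))) (at 0)"
  unfolding w1_coords has_vector_derivative_complex_iff
  using assms by (auto intro!: along_axis_derivative_intros simp: field_simps)

lemma w1_has_derivative_p:
  assumes "p \<noteq> 0"
  shows "((\<lambda>t. w1 x (p + t *\<^sub>R axis i 1)) has_vector_derivative
    Complex (p$i / norm p * p$2 + norm p * axis i 1 $ 2) (- (p$i / norm p * p$1 + norm p * axis i 1 $ 1))) (at 0)"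
  unfolding w1_coords has_vector_derivative_complex_iff
  using assms by (auto intro!: along_axis_derivative_intros simp: field_simps)

lemma phi1_has_derivative_x:
  "((\<lambda>t. phi1 (x + t *\<^sub>R axis i 1) p) has_vector_derivative of_real (p $ i)) (at 0)"
  unfolding phi1_def inner_commute[of _ p] inner_add_right
  by (auto intro!: derivative_eq_intros simp: inner_axis)

lemma phi1_has_derivative_p:
  "((\<lambda>t. phi1 x (p + t *\<^sub>R axis i 1)) has_vector_derivative of_real (x $ i)) (at 0)"
  unfolding phi1_def inner_add_right
  by (auto intro!: derivative_eq_intros simp: inner_axis)

lemma phi2_has_derivative_x:
  assumes "x \<noteq> 0"
  shows "((\<lambda>t. phi2 (x + t *\<^sub>R axis i 1) p) has_vector_derivative of_real (2 * x $ i)) (at 0)"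
  unfolding phi2_coords has_vector_derivative_complex_iff
  using assms by (auto intro!: along_axis_derivative_intros simp: field_simps)

lemma phi2_has_derivative_p:
  assumes "p \<noteq> 0"
  shows "((\<lambda>t. phi2 x (p + t *\<^sub>R axis i 1)) has_vector_derivative of_real (- 2 * p $ i)) (at 0)"
  unfolding phi2_coords has_vector_derivative_complex_iff
  using assms by (auto intro!: along_axis_derivative_intros simp: field_simps)

section \<open>Poisson and Dirac brackets\<close>

lemma PB_antisym: "PB g f x p = - PB f g x p"
  by (simp add: PB_def sum_negf[symmetric] algebra_simps)

lemma PB_self: "PB f f x p = 0"
  by (simp add: PB_def mult.commute)

lemma DB_antisym: "DB g f x p = - DB f g x p"
  unfolding DB_def Let_def
  by (simp add: PB_self PB_antisym[of g] PB_antisym[of _ f] PB_antisym[of phi2 phi1] field_simps)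

lemma DB_self: "DB f f x p = 0"
  using DB_antisym[of f f x p] by simp

lemma DB_altdef:
  assumes "PB phi1 phi2 x p \<noteq> 0"
  shows "DB f g x p = PB f g x p
    + (PB f phi1 x p * PB phi2 g x p - PB f phi2 x p * PB phi1 g x p) / PB phi1 phi2 x p"
  using assms unfolding DB_def Let_def
  by (simp add: PB_self PB_antisym[of phi2 phi1] field_simps power2_eq_square)

lemma DB_scale:
  assumes "\<And>i. dX i f x p = c * dX i F x p" "\<And>i. dP i f x p = c * dP i F x p"
    and "\<And>i. dX i g x p = e * dX i G x p" "\<And>i. dP i g x p = e * dP i G x p"
  shows "DB f g x p = c * e * DB F G x p"
proof -
  have "PB f h x p = c * PB F h x p" "PB h g x p = e * PB h G x p" for h
    unfolding PB_def assms sum_distrib_left by (simp_all add: algebra_simps)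
  then show ?thesis
    unfolding DB_def Let_def by (simp add: algebra_simps)
qed

section \<open>Brackets of square roots\<close>

lemma has_vector_derivative_at_0_iff_quotient:
  fixes f :: "real \<Rightarrow> complex"
  shows "(f has_vector_derivative D) (at 0) \<longleftrightarrow> ((\<lambda>h. (f h - f 0) / of_real h) \<longlongrightarrow> D) (at 0)"
  by (simp add: has_vector_derivative_complex_iff DERIV_def tendsto_complex_iff)

lemma has_vector_derivative_square_root:
  fixes g W :: "real \<Rightarrow> complex"
  assumes W: "(W has_vector_derivative W') (at 0)" and g: "continuous (at 0) g"
    and square: "\<forall>\<^sub>F t in nhds 0. g t ^ 2 = W t" and nonzero: "g 0 \<noteq> 0"
  shows "(g has_vector_derivative W' / (2 * g 0)) (at 0)"
proof -
  have sum_lim: "((\<lambda>h. g h + g 0) \<longlongrightarrow> 2 * g 0) (at 0)"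
    using tendsto_add[OF g[unfolded continuous_at] tendsto_const[of "g 0"]] by (metis mult_2)
  have W0: "g 0 ^ 2 = W 0"
    using eventually_nhds_x_imp_x[OF square] .
  have "\<forall>\<^sub>F h in at 0. g h + g 0 \<noteq> 0"
    using tendsto_imp_eventually_ne[OF sum_lim] nonzero by simp
  moreover have "\<forall>\<^sub>F h in at 0. g h ^ 2 = W h"
    using square by (simp add: eventually_at_filter eventually_mono)
  ultimately have "\<forall>\<^sub>F h in at 0. (W h - W 0) / of_real h / (g h + g 0) = (g h - g 0) / of_real h"
  proof eventually_elim
    case (elim h)
    then have "W h - W 0 = (g h - g 0) * (g h + g 0)"
      using W0 by (simp add: power2_eq_square algebra_simps)
    with elim show ?case
      by simp
  qed
  moreover have "((\<lambda>h. (W h - W 0) / of_real h / (g h + g 0)) \<longlongrightarrow> W' / (2 * g 0)) (at 0)"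
    using tendsto_divide[OF W[unfolded has_vector_derivative_at_0_iff_quotient] sum_lim] nonzero
    by simp
  ultimately show ?thesis
    unfolding has_vector_derivative_at_0_iff_quotient by (rule Lim_transform_eventually[rotated])
qed

lemma has_vector_derivative_square_root_comp:
  fixes g W :: "'a::t2_space \<Rightarrow> complex" and \<gamma> :: "real \<Rightarrow> 'a"
  assumes "open U" "\<gamma> 0 \<in> U" "continuous (at 0) \<gamma>" "continuous_on U g"
    and "\<forall>u\<in>U. g u ^ 2 = W u" "g (\<gamma> 0) \<noteq> 0"
    and "((\<lambda>t. W (\<gamma> t)) has_vector_derivative D) (at 0)"
  shows "((\<lambda>t. g (\<gamma> t)) has_vector_derivative D / (2 * g (\<gamma> 0))) (at 0)"
proof (rule has_vector_derivative_square_root)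
  show "continuous (at 0) (\<lambda>t. g (\<gamma> t))"
    using assms continuous_at_compose[of 0 \<gamma> g] continuous_on_eq_continuous_at
    by (auto simp: o_def)
  have "\<forall>\<^sub>F t in at 0. \<gamma> t \<in> U"
    using assms by (auto simp: continuous_at intro: topological_tendstoD)
  then have "\<forall>\<^sub>F t in nhds 0. \<gamma> t \<in> U"
    using assms(2) by (auto simp: eventually_at_filter elim: eventually_mono)
  then show "\<forall>\<^sub>F t in nhds 0. g (\<gamma> t) ^ 2 = W (\<gamma> t)"
    by (rule eventually_mono) (use assms(5) in auto)
qed (use assms in auto)

definition partially_differentiable :: "obs \<Rightarrow> real^3 \<Rightarrow> real^3 \<Rightarrow> bool" where
  "partially_differentiable f x p \<longleftrightarrow>
    (\<forall>i. (\<lambda>t. f (x + t *\<^sub>R axis i 1) p) differentiable (at 0)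
       \<and> (\<lambda>t. f x (p + t *\<^sub>R axis i 1)) differentiable (at 0))"

definition is_local_sqrt :: "obs \<Rightarrow> obs \<Rightarrow> real^3 \<Rightarrow> real^3 \<Rightarrow> bool" where
  "is_local_sqrt z w x p \<longleftrightarrow> z x p \<noteq> 0 \<and>
    (\<exists>U. open U \<and> (x, p) \<in> U \<and> continuous_on U (\<lambda>(y, q). z y q) \<and> (\<forall>(y, q)\<in>U. z y q ^ 2 = w y q))"

lemma local_sqrt_nonzero_at: "is_local_sqrt z w x p \<Longrightarrow> z x p \<noteq> 0"
  by (simp add: is_local_sqrt_def)

lemma local_sqrt_mult_cnj: "is_local_sqrt z w x p \<Longrightarrow> z x p * cnj (z x p) = of_real (cmod (w x p))"
  unfolding is_local_sqrt_def by (auto simp flip: complex_norm_square norm_power)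

lemma partials_of_local_sqrt:
  assumes sqrt: "is_local_sqrt z w x p" and diff: "partially_differentiable w x p"
  shows "dX i z x p = inverse (2 * z x p) * dX i w x p"
    and "dP i z x p = inverse (2 * z x p) * dP i w x p"
    and "dX i (cnjf z) x p = cnj (inverse (2 * z x p)) * dX i (cnjf w) x p"
    and "dP i (cnjf z) x p = cnj (inverse (2 * z x p)) * dP i (cnjf w) x p"
proof -
  obtain U where U: "open U" "(x, p) \<in> U" and cont: "continuous_on U (case_prod z)"
    and square: "\<forall>u\<in>U. case_prod z u ^ 2 = case_prod w u" and nonzero: "z x p \<noteq> 0"
    using sqrt unfolding is_local_sqrt_def by fastforce
  have wx: "((\<lambda>t. w (x + t *\<^sub>R axis i 1) p) has_vector_derivative dX i w x p) (at 0)"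
    and wp: "((\<lambda>t. w x (p + t *\<^sub>R axis i 1)) has_vector_derivative dP i w x p) (at 0)"
    using diff by (auto simp: partially_differentiable_def dX_def dP_def vector_derivative_works)
  have zx: "((\<lambda>t. z (x + t *\<^sub>R axis i 1) p) has_vector_derivative dX i w x p / (2 * z x p)) (at 0)"
    using has_vector_derivative_square_root_comp[OF U(1) _ _ cont square, of "\<lambda>t. (x + t *\<^sub>R axis i 1, p)"]
      U nonzero wx by (auto intro!: continuous_intros)
  have zp: "((\<lambda>t. z x (p + t *\<^sub>R axis i 1)) has_vector_derivative dP i w x p / (2 * z x p)) (at 0)"
    using has_vector_derivative_square_root_comp[OF U(1) _ _ cont square, of "\<lambda>t. (x, p + t *\<^sub>R axis i 1)"]
      U nonzero wp by (auto intro!: continuous_intros)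
  show "dX i z x p = inverse (2 * z x p) * dX i w x p"
    by (simp only: dX_eqI[where f=z, OF zx] divide_inverse_commute)
  show "dP i z x p = inverse (2 * z x p) * dP i w x p"
    by (simp only: dP_eqI[where f=z, OF zp] divide_inverse_commute)
  show "dX i (cnjf z) x p = cnj (inverse (2 * z x p)) * dX i (cnjf w) x p"
    by (simp only: dX_cnjf_eqI[where f=z, OF zx] dX_cnjf_eqI[where f=w, OF wx]
        divide_inverse_commute complex_cnj_mult)
  show "dP i (cnjf z) x p = cnj (inverse (2 * z x p)) * dP i (cnjf w) x p"
    by (simp only: dP_cnjf_eqI[where f=z, OF zp] dP_cnjf_eqI[where f=w, OF wp]
        divide_inverse_commute complex_cnj_mult)
qed

lemma DB_of_local_sqrts:
  assumes "is_local_sqrt z w x p" "partially_differentiable w x p"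
    and "is_local_sqrt z' w' x p" "partially_differentiable w' x p"
  shows "DB z z' x p = DB w w' x p / (4 * z x p * z' x p)"
    and "DB z (cnjf z') x p = DB w (cnjf w') x p / (4 * z x p * cnj (z' x p))"
proof -
  have "DB z z' x p = inverse (2 * z x p) * inverse (2 * z' x p) * DB w w' x p"
    by (rule DB_scale) (use partials_of_local_sqrt[OF assms(1,2)] partials_of_local_sqrt[OF assms(3,4)] in auto)
  then show "DB z z' x p = DB w w' x p / (4 * z x p * z' x p)"
    by (simp add: field_simps)
  have "DB z (cnjf z') x p = inverse (2 * z x p) * cnj (inverse (2 * z' x p)) * DB w (cnjf w') x p"
    by (rule DB_scale) (use partials_of_local_sqrt[OF assms(1,2)] partials_of_local_sqrt[OF assms(3,4)] in auto)
  then show "DB z (cnjf z') x p = DB w (cnjf w') x p / (4 * z x p * cnj (z' x p))"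
    by (simp add: field_simps)
qed

lemma DB_local_sqrt_cnj_self:
  assumes sqrt: "is_local_sqrt z w x p" and "partially_differentiable w x p"
    and DB_w: "DB w (cnjf w) x p = - 4 * \<i> * of_real (cmod (w x p))"
  shows "DB z (cnjf z) x p = - \<i>"
proof -
  have zz: "z x p * cnj (z x p) = of_real (cmod (w x p))"
    using local_sqrt_mult_cnj[OF sqrt] .
  moreover have "z x p * cnj (z x p) \<noteq> 0"
    using local_sqrt_nonzero_at[OF sqrt] by simp
  moreover have "DB z (cnjf z) x p = DB w (cnjf w) x p / (4 * (z x p * cnj (z x p)))"
    using DB_of_local_sqrts(2)[OF sqrt assms(2) sqrt assms(2)] by (simp add: mult.assoc)
  ultimately show ?thesis
    unfolding DB_w by simp
qed

section \<open>Brackets on the constraint surface\<close>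

locale constraint_point =
  fixes x p :: "real^3"
  assumes on_constraint: "onConstraint x p"
begin

lemma x_nonzero: "x \<noteq> 0" and p_nonzero: "p \<noteq> 0"
  using on_constraint by (auto simp: onConstraint_def)

lemma norm_p_eq_norm_x: "norm p = norm x"
  using on_constraint by (simp add: onConstraint_def power2_eq_iff_nonneg)

lemma inner_coords: "x$1 * p$1 + x$2 * p$2 + x$3 * p$3 = 0"
  using on_constraint by (simp add: onConstraint_def inner_vec_def sum_3)

lemma norm_x_coords: "norm x ^ 2 = x$1^2 + x$2^2 + x$3^2"
  unfolding power2_norm_eq_inner by (simp add: inner_vec_def sum_3 power2_eq_square)

lemma norm_p_coords: "norm x ^ 2 = p$1^2 + p$2^2 + p$3^2"
  unfolding norm_p_eq_norm_x[symmetric] power2_norm_eq_inner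
  by (simp add: inner_vec_def sum_3 power2_eq_square)

lemma NN_eq: "NN x p = norm x ^ 2"
proof -
  have "norm (cross3 x p) ^ 2 = (norm x ^ 2) ^ 2"
    using norm_cross[of x p] on_constraint by (simp add: onConstraint_def norm_p_eq_norm_x)
  then show ?thesis
    unfolding NN_def Jv_def by (rule power2_eq_imp_eq) auto
qed

lemma norm_w0: "cmod (w0 x p) = NN x p + Jv x p $ 3"
proof -
  have "(norm x * x$1 + norm p * p$2)^2 + (norm p * p$1 - norm x * x$2)^2 = (NN x p + Jv x p $ 3)^2"
    unfolding NN_eq Jv_component_3 norm_p_eq_norm_x
    using inner_coords norm_x_coords norm_p_coords by algebra
  then show ?thesis
    unfolding w0_coords complex_norm using abs_Jv_component_le_NN[of x p 3] by simp
qed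

lemma norm_w1: "cmod (w1 x p) = NN x p - Jv x p $ 3"
proof -
  have "(norm p * p$2 - norm x * x$1)^2 + (- (norm x * x$2 + norm p * p$1))^2 = (NN x p - Jv x p $ 3)^2"
    unfolding NN_eq Jv_component_3 norm_p_eq_norm_x
    using inner_coords norm_x_coords norm_p_coords by algebra
  then show ?thesis
    unfolding w1_coords complex_norm using abs_Jv_component_le_NN[of x p 3] by simp
qed

lemma w0_partially_differentiable: "partially_differentiable w0 x p"
  unfolding partially_differentiable_def
  using differentiableI_vector[OF w0_has_derivative_x[OF x_nonzero]]
    differentiableI_vector[OF w0_has_derivative_p[OF p_nonzero]] by blast

lemma w1_partially_differentiable: "partially_differentiable w1 x p"
  unfolding partially_differentiable_def
  using differentiableI_vector[OF w1_has_derivative_x[OF x_nonzero]]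
    differentiableI_vector[OF w1_has_derivative_p[OF p_nonzero]] by blast

text \<open>An opaque name for \<open>1 / norm x\<close>, so that \<open>algebra\<close> treats it as an atom subject
  only to \<open>inv_norm_x * norm x = 1\<close>.\<close>

definition inv_norm_x :: real where "inv_norm_x = inverse (norm x)"

lemma inv_norm_x_mult: "inv_norm_x * norm x = 1"
  using x_nonzero by (simp add: inv_norm_x_def)

lemma divide_norm_x: "t / norm x = t * inv_norm_x"
  by (simp add: inv_norm_x_def divide_inverse)

lemmas constraint_relations = inner_coords norm_x_coords norm_p_coords inv_norm_x_mult

lemmas partials =
  dX_eqI[OF w0_has_derivative_x[OF x_nonzero]] dP_eqI[OF w0_has_derivative_p[OF p_nonzero]]
  dX_eqI[OF w1_has_derivative_x[OF x_nonzero]] dP_eqI[OF w1_has_derivative_p[OF p_nonzero]]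
  dX_cnjf_eqI[OF w0_has_derivative_x[OF x_nonzero]] dP_cnjf_eqI[OF w0_has_derivative_p[OF p_nonzero]]
  dX_cnjf_eqI[OF w1_has_derivative_x[OF x_nonzero]] dP_cnjf_eqI[OF w1_has_derivative_p[OF p_nonzero]]
  dX_eqI[OF phi1_has_derivative_x] dP_eqI[OF phi1_has_derivative_p]
  dX_eqI[OF phi2_has_derivative_x[OF x_nonzero]] dP_eqI[OF phi2_has_derivative_p[OF p_nonzero]]

lemmas PB_expansion = PB_def sum_3 partials axis_def complex_eq_iff norm_p_eq_norm_x divide_norm_x

lemma PB_phi1_phi2: "PB phi1 phi2 x p = - 4 * of_real (norm x ^ 2)"
  using norm_x_coords norm_p_coords by (simp add: PB_expansion power2_eq_square)

lemma DB_on_constraint: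
  "DB f g x p = PB f g x p
    + (PB f phi1 x p * PB g phi2 x p - PB g phi1 x p * PB f phi2 x p) * of_real (inv_norm_x ^ 2) / 4"
  using x_nonzero
  by (simp add: DB_altdef PB_phi1_phi2 PB_antisym[of phi1 g] PB_antisym[of phi2 g] inv_norm_x_def field_simps)

lemma PB_w0_phi1: "PB w0 phi1 x p = 2 * of_real (norm x) * Complex (x$1 - p$2) (- (x$2 + p$1))"
  apply (simp add: PB_expansion)
  using constraint_relations by (intro conjI; algebra)

lemma PB_w0_phi2: "PB w0 phi2 x p = - 2 * of_real (norm x) * Complex (p$1 + x$2) (x$1 - p$2)"
  apply (simp add: PB_expansion)
  using constraint_relations by (intro conjI; algebra)

lemma PB_w1_phi1: "PB w1 phi1 x p = - 2 * of_real (norm x) * Complex (x$1 + p$2) (x$2 - p$1)"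
  apply (simp add: PB_expansion)
  using constraint_relations by (intro conjI; algebra)

lemma PB_w1_phi2: "PB w1 phi2 x p = - 2 * of_real (norm x) * Complex (x$2 - p$1) (- (x$1 + p$2))"
  apply (simp add: PB_expansion)
  using constraint_relations by (intro conjI; algebra)

lemma PB_cnj_w0_phi1: "PB (cnjf w0) phi1 x p = 2 * of_real (norm x) * Complex (x$1 - p$2) (x$2 + p$1)"
  apply (simp add: PB_expansion)
  using constraint_relations by (intro conjI; algebra)

lemma PB_cnj_w0_phi2: "PB (cnjf w0) phi2 x p = - 2 * of_real (norm x) * Complex (p$1 + x$2) (p$2 - x$1)"
  apply (simp add: PB_expansion)
  using constraint_relations by (intro conjI; algebra)

lemma PB_cnj_w1_phi1: "PB (cnjf w1) phi1 x p = - 2 * of_real (norm x) * Complex (x$1 + p$2) (p$1 - x$2)"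
  apply (simp add: PB_expansion)
  using constraint_relations by (intro conjI; algebra)

lemma PB_cnj_w1_phi2: "PB (cnjf w1) phi2 x p = - 2 * of_real (norm x) * Complex (x$2 - p$1) (x$1 + p$2)"
  apply (simp add: PB_expansion)
  using constraint_relations by (intro conjI; algebra)

lemmas PB_with_constraints = PB_w0_phi1 PB_w0_phi2 PB_w1_phi1 PB_w1_phi2
  PB_cnj_w0_phi1 PB_cnj_w0_phi2 PB_cnj_w1_phi1 PB_cnj_w1_phi2

lemma DB_w0_w1: "DB w0 w1 x p = 0"
  unfolding DB_on_constraint PB_with_constraints NN_eq Jv_component_3
  apply (simp add: PB_expansion algebra_simps)
  using constraint_relations by algebra

lemma DB_w0_cnj_w1: "DB w0 (cnjf w1) x p = 0"
  unfolding DB_on_constraint PB_with_constraints NN_eq Jv_component_3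
  apply (simp add: PB_expansion algebra_simps)
  using constraint_relations by algebra

lemma DB_w1_cnj_w0: "DB w1 (cnjf w0) x p = 0"
  unfolding DB_on_constraint PB_with_constraints NN_eq Jv_component_3
  apply (simp add: PB_expansion algebra_simps)
  using constraint_relations by algebra

lemma DB_w0_cnj_w0: "DB w0 (cnjf w0) x p = - 4 * \<i> * of_real (NN x p + Jv x p $ 3)"
  unfolding DB_on_constraint PB_with_constraints NN_eq Jv_component_3
  apply (simp add: PB_expansion algebra_simps)
  using constraint_relations by algebra

lemma DB_w1_cnj_w1: "DB w1 (cnjf w1) x p = - 4 * \<i> * of_real (NN x p - Jv x p $ 3)"
  unfolding DB_on_constraint PB_with_constraints NN_eq Jv_component_3
  apply (simp add: PB_expansion algebra_simps)
  using constraint_relations by algebra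

lemma moduli_of_square_roots:
  assumes "a ^ 2 = w0 x p" and "b ^ 2 = w1 x p"
  shows "(cmod a ^ 2 + cmod b ^ 2) / 2 = NN x p" and "(cmod a ^ 2 - cmod b ^ 2) / 2 = Jv x p $ 3"
  using assms norm_w0 norm_w1 by (auto simp flip: norm_power)

lemma spinor_brackets:
  assumes z0: "is_local_sqrt z0 w0 x p" and z1: "is_local_sqrt z1 w1 x p"
  shows "DB z0 (cnjf z0) x p = - \<i>" and "DB z1 (cnjf z1) x p = - \<i>"
    and "DB z0 (cnjf z1) x p = 0" and "DB z1 (cnjf z0) x p = 0"
    and "DB z0 z1 x p = 0" and "DB z1 z0 x p = 0"
proof -
  show "DB z0 (cnjf z0) x p = - \<i>"
    using DB_local_sqrt_cnj_self[OF z0 w0_partially_differentiable] DB_w0_cnj_w0 norm_w0 by simp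
  show "DB z1 (cnjf z1) x p = - \<i>"
    using DB_local_sqrt_cnj_self[OF z1 w1_partially_differentiable] DB_w1_cnj_w1 norm_w1 by simp
  note DB_mixed = DB_of_local_sqrts[OF z0 w0_partially_differentiable z1 w1_partially_differentiable]
    DB_of_local_sqrts[OF z1 w1_partially_differentiable z0 w0_partially_differentiable]
  show "DB z0 (cnjf z1) x p = 0" "DB z1 (cnjf z0) x p = 0"
    by (simp_all add: DB_mixed DB_w0_cnj_w1 DB_w1_cnj_w0)
  show "DB z0 z1 x p = 0"
    by (simp add: DB_mixed DB_w0_w1)
  then show "DB z1 z0 x p = 0"
    by (simp add: DB_antisym[of z1 z0])
qed

end

theorem mainTheorem7:
  fixes x p :: "real^3"
  assumes "onConstraint x p"
  shows "cmod (w0 x p) = NN x p + Jv x p $ 3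
    \<and> cmod (w1 x p) = NN x p - Jv x p $ 3
    \<and> DB w0 w1 x p = 0
    \<and> DB w0 (cnjf w1) x p = 0
    \<and> DB w0 (cnjf w0) x p = - 4 * \<i> * complex_of_real (NN x p + Jv x p $ 3)
    \<and> DB w1 (cnjf w1) x p = - 4 * \<i> * complex_of_real (NN x p - Jv x p $ 3)
    \<and> (\<forall>a b :: complex. a ^ 2 = w0 x p \<longrightarrow> b ^ 2 = w1 x p \<longrightarrow>
           (cmod a ^ 2 + cmod b ^ 2) / 2 = NN x p \<and> (cmod a ^ 2 - cmod b ^ 2) / 2 = Jv x p $ 3)
    \<and> (\<forall>U z0 z1. open U \<longrightarrow> (x, p) \<in> U \<longrightarrow>
           continuous_on U (\<lambda>(y, q). z0 y q) \<longrightarrow> continuous_on U (\<lambda>(y, q). z1 y q) \<longrightarrow>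
           (\<forall>(y, q)\<in>U. z0 y q ^ 2 = w0 y q \<and> z1 y q ^ 2 = w1 y q) \<longrightarrow>
           w0 x p \<noteq> 0 \<longrightarrow> w1 x p \<noteq> 0 \<longrightarrow>
           DB z0 (cnjf z0) x p = - \<i> \<and> DB z1 (cnjf z1) x p = - \<i> \<and>
           DB z0 (cnjf z1) x p = 0 \<and> DB z1 (cnjf z0) x p = 0 \<and>
           DB z0 z0 x p = 0 \<and> DB z1 z1 x p = 0 \<and> DB z0 z1 x p = 0 \<and> DB z1 z0 x p = 0)"
proof -
  interpret constraint_point x p
    by unfold_locales (rule assms)
  have square_roots: "(cmod a ^ 2 + cmod b ^ 2) / 2 = NN x p \<and> (cmod a ^ 2 - cmod b ^ 2) / 2 = Jv x p $ 3"
    if "a ^ 2 = w0 x p" "b ^ 2 = w1 x p" for a b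
    using moduli_of_square_roots[OF that] by simp
  have spinors: "DB z0 (cnjf z0) x p = - \<i> \<and> DB z1 (cnjf z1) x p = - \<i> \<and>
      DB z0 (cnjf z1) x p = 0 \<and> DB z1 (cnjf z0) x p = 0 \<and>
      DB z0 z0 x p = 0 \<and> DB z1 z1 x p = 0 \<and> DB z0 z1 x p = 0 \<and> DB z1 z0 x p = 0"
    if "open U" "(x, p) \<in> U" "continuous_on U (\<lambda>(y, q). z0 y q)" "continuous_on U (\<lambda>(y, q). z1 y q)"
      "\<forall>(y, q)\<in>U. z0 y q ^ 2 = w0 y q \<and> z1 y q ^ 2 = w1 y q" "w0 x p \<noteq> 0" "w1 x p \<noteq> 0"
    for U and z0 z1 :: obs
  proof -
    have "is_local_sqrt z0 w0 x p" "is_local_sqrt z1 w1 x p"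
      using that unfolding is_local_sqrt_def by (fastforce simp: zero_power2)+
    then show ?thesis
      using spinor_brackets DB_self by simp
  qed
  show ?thesis
    using norm_w0 norm_w1 DB_w0_w1 DB_w0_cnj_w1 DB_w0_cnj_w0 DB_w1_cnj_w1 square_roots spinors
    by blast
qed

end
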